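(* Let $M=(r,q,u)$ be a floor-randomized mechanism. Then there exists a floor-randomized mechanism $\tilde M=(\tilde r,\tilde q,\tilde u)$ satisfying DD such that $\tilde q(\theta)\le q(\theta)$ for all $\theta>\underline\theta$, $\tilde u(\theta)\le u(\theta)$ for all $\theta$, and $\mathrm{RS}_\alpha(\theta,\tilde M)\ge\mathrm{RS}_\alpha(\theta,M)$ for all $\theta$. Moreover, for every $\theta$ with $q(\theta)>q_e(\theta)$ (with $\theta>\underline\theta$ for the first inequality) the inequalities $\tilde q(\theta)<q(\theta)$ and $\mathrm{RS}_\alpha(\theta,\tilde M)>\mathrm{RS}_\alpha(\theta,M)$ are strict, and if $q(\underline\theta)\neq q_e(\underline\theta)$ then $\mathrm{RS}_\alpha(\underline\theta,\tilde M)>\mathrm{RS}_\alpha(\underline\theta,M)$.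
   Context: Setting. Let $\Theta=[\underline\theta,\overline\theta]$ with $0<\underline\theta<\overline\theta$. Let $c>0$ and let $P:\mathbb R_+\to\mathbb R_+$ be continuous and strictly decreasing with $P(\overline q)=0$ for some $\overline q>0$. Put $V(q)=\int_0^q P(z)\,dz$ and $\mathrm{TS}(\theta,q)=V(q)-c-\theta q$ for $q>0$, $\mathrm{TS}(\theta,0)=0$. Assume (A2): $\mathrm{TS}(\overline\theta,P^{-1}(\overline\theta))>0$. A mechanism is a triple $M=(r,q,u)$ of functions $r:\Theta\to[0,1]$, $q:\Theta\to[0,\overline q]$, $u:\Theta\to\mathbb R$ with $q(\theta)=0$ if and only if $r(\theta)=0$. It is IC if $u(\theta)\ge u(\theta')+(\theta'-\theta)q(\theta')r(\theta')$ for all $\theta,\theta'\in\Theta$, and IR if $u(\theta)\ge 0$ for all $\theta$. (Known fact: $M$ is IC iff $\theta\mapsto q(\theta)r(\theta)$ is nonincreasing and $u(\theta)=u(\overline\theta)+\int_\theta^{\overline\theta}q(z)r(z)\,dz$ for all $\theta$; an IC mechanism is IR iff $u(\overline\theta)\ge0$.) Fix $\alpha\in[0,1)$. The regulator's surplus at $\theta$ is $\mathrm{RS}_\alpha(\theta,M)=r(\theta)\,\mathrm{TS}(\theta,q(\theta))-(1-\alpha)u(\theta)$. The quantity floor $\hat q$ is the unique $q>0$ with $V(q)-qP(q)=c$. A mechanism $(r,q,u)$ is floor-randomized if it is IC, IR, $u(\overline\theta)=0$, and $\Theta$ can be partitioned into three pairwise disjoint (possibly empty) intervals $\Theta_1,\Theta_{01},\Theta_0$,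 with every element of $\Theta_0$ larger than every element of $\Theta_{01}$ and every element of $\Theta_{01}$ larger than every element of $\Theta_1$, such that: $q(\theta)\ge\hat q$ and $r(\theta)=1$ for $\theta\in\Theta_1$; $q(\theta)=\hat q$ and $r(\theta)\in(0,1)$ for $\theta\in\Theta_{01}$; $q(\theta)=r(\theta)=0$ for $\theta\in\Theta_0$. The efficient quantity is $q_e(\theta)=P^{-1}(\theta)$. A mechanism satisfies downward distortion (DD) if $q(\theta)\le q_e(\theta)$ for all $\theta$, with equality at $\theta=\underline\theta$. *)

theory Defs
  imports "HOL-Analysis.Analysis"
begin

definition Theta :: "real \<Rightarrow> real \<Rightarrow> real set" where
  "Theta thl thh = {thl..thh}"

definition V :: "(real \<Rightarrow> real) \<Rightarrow> real \<Rightarrow> real" where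
  "V P q = integral {0..q} P"

definition TS :: "(real \<Rightarrow> real) \<Rightarrow> real \<Rightarrow> real \<Rightarrow> real \<Rightarrow> real" where
  "TS P c th q = (if q > 0 then V P q - c - th * q else 0)"

definition qe :: "(real \<Rightarrow> real) \<Rightarrow> real \<Rightarrow> real" where
  "qe P th = (THE q. q \<ge> 0 \<and> P q = th)"

definition qhat :: "(real \<Rightarrow> real) \<Rightarrow> real \<Rightarrow> real" where
  "qhat P c = (THE q. q > 0 \<and> V P q - q * P q = c)"

definition mechanism :: "real \<Rightarrow> real \<Rightarrow> real \<Rightarrow>
    (real \<Rightarrow> real) \<Rightarrow> (real \<Rightarrow> real) \<Rightarrow> (real \<Rightarrow> real) \<Rightarrow> bool" where
  "mechanism thl thh qbar r q u \<longleftrightarrow>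
     (\<forall>th\<in>Theta thl thh. r th \<in> {0..1} \<and> q th \<in> {0..qbar} \<and> (q th = 0 \<longleftrightarrow> r th = 0))"

definition IC :: "real \<Rightarrow> real \<Rightarrow>
    (real \<Rightarrow> real) \<Rightarrow> (real \<Rightarrow> real) \<Rightarrow> (real \<Rightarrow> real) \<Rightarrow> bool" where
  "IC thl thh r q u \<longleftrightarrow>
     (\<forall>th\<in>Theta thl thh. \<forall>th'\<in>Theta thl thh. u th \<ge> u th' + (th' - th) * q th' * r th')"

definition IR :: "real \<Rightarrow> real \<Rightarrow> (real \<Rightarrow> real) \<Rightarrow> bool" where
  "IR thl thh u \<longleftrightarrow> (\<forall>th\<in>Theta thl thh. u th \<ge> 0)"

definition floor_randomized :: "(real \<Rightarrow> real) \<Rightarrow> real \<Rightarrow> real \<Rightarrow> real \<Rightarrow> real \<Rightarrow>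
    (real \<Rightarrow> real) \<Rightarrow> (real \<Rightarrow> real) \<Rightarrow> (real \<Rightarrow> real) \<Rightarrow> bool" where
  "floor_randomized P c thl thh qbar r q u \<longleftrightarrow>
     mechanism thl thh qbar r q u \<and> IC thl thh r q u \<and> IR thl thh u \<and> u thh = 0 \<and>
     (\<exists>T1 T01 T0 :: real set.
        is_interval T1 \<and> is_interval T01 \<and> is_interval T0 \<and>
        T1 \<inter> T01 = {} \<and> T1 \<inter> T0 = {} \<and> T01 \<inter> T0 = {} \<and>
        T1 \<union> T01 \<union> T0 = Theta thl thh \<and>
        (\<forall>x\<in>T0. \<forall>y\<in>T01. x > y) \<and> (\<forall>x\<in>T01. \<forall>y\<in>T1. x > y) \<and>
        (\<forall>th\<in>T1. q th \<ge> qhat P c \<and> r th = 1) \<and>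
        (\<forall>th\<in>T01. q th = qhat P c \<and> r th \<in> {0<..<1}) \<and>
        (\<forall>th\<in>T0. q th = 0 \<and> r th = 0))"

definition DD :: "(real \<Rightarrow> real) \<Rightarrow> real \<Rightarrow> real \<Rightarrow> (real \<Rightarrow> real) \<Rightarrow> bool" where
  "DD P thl thh q \<longleftrightarrow> (\<forall>th\<in>Theta thl thh. q th \<le> qe P th) \<and> q thl = qe P thl"

definition RS :: "(real \<Rightarrow> real) \<Rightarrow> real \<Rightarrow> real \<Rightarrow> real \<Rightarrow>
    (real \<Rightarrow> real) \<Rightarrow> (real \<Rightarrow> real) \<Rightarrow> (real \<Rightarrow> real) \<Rightarrow> real" where
  "RS P c \<alpha> th r q u = r th * TS P c th (q th) - (1 - \<alpha>) * u th"

end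

theory Submission
  imports Defs
begin

text \<open>Capping the quantity at the efficient level \<open>qe\<close> (and serving the lowest type
  efficiently with certainty) keeps the allocation \<open>q r\<close> decreasing, so charging the envelope
  rent \<open>\<integral> q r\<close> over \<open>[\<theta>, thh]\<close> gives again an incentive compatible mechanism with zero rent
  at the top. Above the lowest type the new allocation is dominated by the old one, and incentive
  compatibility makes the old utility at least the envelope integral of the old allocation, so
  rents fall. Since \<open>V q - \<theta> q\<close> is uniquely maximised at \<open>qe \<theta>\<close>, the surplus term \<open>r TS\<close> rises,
  strictly where the quantity was distorted upwards. Assumption (A2) puts the floor \<open>qhat\<close>
  strictly below \<open>qe\<close>, so the cap leaves the floor structure intact.\<close>

lemma antimono_on_integrable:
  fixes g :: "real \<Rightarrow> real"
  assumes "antimono_on {a..b} g"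
  shows "g integrable_on {a..b}"
proof -
  have "mono_on {a..b} (\<lambda>x. - g x)"
    using assms by (auto simp: monotone_on_def)
  then show ?thesis
    using integrable_on_mono_on integrable_neg_iff by blast
qed

lemma antimono_on_integral_bounds:
  fixes g :: "real \<Rightarrow> real"
  assumes g: "antimono_on {a..b} g" and "a \<le> b"
  shows "(b - a) * g b \<le> integral {a..b} g" and "integral {a..b} g \<le> (b - a) * g a"
proof -
  have int: "g integrable_on {a..b}"
    using g by (rule antimono_on_integrable)
  have "integral {a..b} (\<lambda>_. g b) \<le> integral {a..b} g"
    by (rule integral_le) (use int g \<open>a \<le> b\<close> in \<open>auto simp: monotone_on_def\<close>)
  then show "(b - a) * g b \<le> integral {a..b} g"
    using \<open>a \<le> b\<close> by simp
  have "integral {a..b} g \<le> integral {a..b} (\<lambda>_. g a)"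
    by (rule integral_le) (use int g \<open>a \<le> b\<close> in \<open>auto simp: monotone_on_def\<close>)
  then show "integral {a..b} g \<le> (b - a) * g a"
    using \<open>a \<le> b\<close> by simp
qed

lemma integral_split_real:
  fixes g :: "real \<Rightarrow> real"
  assumes "antimono_on {a..b} g" "a \<le> m" "m \<le> b"
  shows "integral {a..m} g + integral {m..b} g = integral {a..b} g"
  using assms by (intro Henstock_Kurzweil_Integration.integral_combine antimono_on_integrable) auto


lemma tail_integral_subgradient:
  fixes g :: "real \<Rightarrow> real"
  assumes g: "antimono_on {a..b} g" and x: "x \<in> {a..b}" and y: "y \<in> {a..b}"
  shows "integral {y..b} g + (y - x) * g y \<le> integral {x..b} g"
proof -
  have sub: "antimono_on {s..t} g" if "a \<le> s" "t \<le> b" for s t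
    using g by (rule monotone_on_subset) (use that in auto)
  show ?thesis
  proof (cases "x \<le> y")
    case True
    have "(y - x) * g y \<le> integral {x..y} g"
      using antimono_on_integral_bounds(1)[OF sub True] y x by auto
    moreover have "integral {x..y} g + integral {y..b} g = integral {x..b} g"
      using integral_split_real[OF sub] True x y by auto
    ultimately show ?thesis by linarith
  next
    case False
    have "integral {y..x} g \<le> (x - y) * g y"
      using antimono_on_integral_bounds(2)[OF sub, of y x] False x y by auto
    moreover have "integral {y..x} g + integral {x..b} g = integral {y..b} g"
      using integral_split_real[OF sub] False x y by auto
    ultimately show ?thesis by (simp add: algebra_simps)
  qed
qed

text \<open>Right-endpoint Riemann sums of an antitone function undershoot its integral by at most
  the mesh times the total variation, which lets the integral be bounded without knowing
  anything about \<open>u\<close> beyond its increments.\<close>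
lemma tail_integral_le_decrement:
  fixes g u :: "real \<Rightarrow> real"
  assumes g: "antimono_on {a..b} g"
    and step: "\<And>x y. a \<le> x \<Longrightarrow> x < y \<Longrightarrow> y \<le> b \<Longrightarrow> (y - x) * g y \<le> u x - u y"
    and x: "x \<in> {a..b}"
  shows "integral {x..b} g \<le> u x - u b"
proof -
  have sub: "antimono_on {s..t} g" if "a \<le> s" "t \<le> b" for s t
    using g by (rule monotone_on_subset) (use that in auto)
  have g_le: "g t \<le> g s" if "a \<le> s" "s \<le> t" "t \<le> b" for s t
    using g that by (auto simp: monotone_on_def)
  have piece: "integral {s..t} g - h * (g s - g t) \<le> u s - u t"
    if "a \<le> s" "s < t" "t \<le> b" "t - s \<le> h" for h s t
  proof -
    have "integral {s..t} g \<le> (t - s) * g s"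
      using antimono_on_integral_bounds(2)[OF sub] that by auto
    moreover have "(t - s) * (g s - g t) \<le> h * (g s - g t)"
      using that g_le[of s t] by (intro mult_right_mono) auto
    ultimately show ?thesis
      using step[of s t] that by (simp add: algebra_simps)
  qed
  have mesh: "integral {s..t} g - h * (g s - g t) \<le> u s - u t"
    if "a \<le> s" "s \<le> t" "t \<le> b" "t - s \<le> real n * h" "0 < h" for n h s t
    using that
  proof (induction n arbitrary: s)
    case 0
    then show ?case by simp
  next
    case (Suc n)
    show ?case
    proof (cases "t - s \<le> h")
      case True
      then show ?thesis
        using piece[of s t h] Suc.prems by (cases "s = t") auto
    next
      case False
      define m where "m = s + h"
      have m: "s < m" "m < t"
        using False Suc.prems by (auto simp: m_def)
      have "integral {m..t} g - h * (g m - g t) \<le> u m - u t"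
        using Suc.IH[of m] Suc.prems m by (auto simp: m_def algebra_simps)
      moreover have "integral {s..m} g - h * (g s - g m) \<le> u s - u m"
        using piece[of s m h] Suc.prems m by (auto simp: m_def)
      moreover have "integral {s..m} g + integral {m..t} g = integral {s..t} g"
        using integral_split_real[OF sub] Suc.prems m by auto
      ultimately show ?thesis by (simp add: algebra_simps)
    qed
  qed
  have "integral {x..b} g \<le> u x - u b + e" if "0 < e" for e
  proof -
    define D where "D = g x - g b"
    have D: "0 \<le> D"
      using g_le[of x b] x by (auto simp: D_def)
    define h where "h = e / (D + 1)"
    have h: "0 < h" "h * D \<le> e"
      using D \<open>0 < e\<close> by (auto simp: h_def field_simps)
    obtain n where "(b - x) / h \<le> real n"
      using real_arch_simple by blast
    then have "b - x \<le> real n * h"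
      using h by (simp add: field_simps)
    then have "integral {x..b} g - h * D \<le> u x - u b"
      using mesh[of x b n h] x h by (auto simp: D_def)
    then show ?thesis
      using h by linarith
  qed
  then show ?thesis
    by (rule field_le_epsilon)
qed

locale demand =
  fixes P :: "real \<Rightarrow> real"
  assumes P_cont: "continuous_on {0..} P"
    and P_decr: "\<And>x y. 0 \<le> x \<Longrightarrow> x < y \<Longrightarrow> P y < P x"
begin

lemma P_antimono_on: "antimono_on {a..b} P" if "0 \<le> a"
proof (rule monotone_onI)
  fix x y assume "x \<in> {a..b}" "y \<in> {a..b}" "x \<le> y"
  then show "P y \<le> P x"
    using P_decr[of x y] that by (cases "x = y") auto
qed

lemma P_integrable: "P integrable_on {a..b}" if "0 \<le> a"
  using P_antimono_on[OF that] by (rule antimono_on_integrable)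

lemma V_diff: "V P b - V P a = integral {a..b} P" if "0 \<le> a" "a \<le> b"
  using integral_split_real[OF P_antimono_on, of 0 a b] that by (simp add: V_def)

lemma V_diff_less: "V P b - V P a < (b - a) * P a" if "0 \<le> a" "a < b"
proof -
  define m where "m = (a + b) / 2"
  have m: "a < m" "m < b"
    using that by (auto simp: m_def)
  have "V P m - V P a \<le> (m - a) * P a"
    using antimono_on_integral_bounds(2)[OF P_antimono_on] V_diff[of a m] that m by auto
  moreover have "V P b - V P m \<le> (b - m) * P m"
    using antimono_on_integral_bounds(2)[OF P_antimono_on] V_diff[of m b] that m by auto
  moreover have "(b - m) * P m < (b - m) * P a"
    using P_decr[of a m] that m by simp
  ultimately show ?thesis by (simp add: algebra_simps)
qed

lemma V_diff_greater: "(b - a) * P b < V P b - V P a" if "0 \<le> a" "a < b"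
proof -
  define m where "m = (a + b) / 2"
  have m: "a < m" "m < b"
    using that by (auto simp: m_def)
  have "(m - a) * P m \<le> V P m - V P a"
    using antimono_on_integral_bounds(1)[OF P_antimono_on] V_diff[of a m] that m by auto
  moreover have "(b - m) * P b \<le> V P b - V P m"
    using antimono_on_integral_bounds(1)[OF P_antimono_on] V_diff[of m b] that m by auto
  moreover have "(m - a) * P b < (m - a) * P m"
    using P_decr[of m b] that m by simp
  ultimately show ?thesis by (simp add: algebra_simps)
qed

lemma qe_eqI: "qe P th = x" if "0 \<le> x" "P x = th"
  unfolding qe_def
proof (rule the_equality)
  fix y assume y: "0 \<le> y \<and> P y = th"
  show "y = x"
  proof (rule ccontr)
    assume "y \<noteq> x"
    then have "y < x \<or> x < y" by linarith
    then show False
      using P_decr[of x y] P_decr[of y x] y that by auto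
  qed
qed (use that in auto)

lemma qe_correct:
  assumes "0 \<le> qbar" "P qbar = 0" "0 < th" "th \<le> P 0"
  shows "0 \<le> qe P th" "qe P th < qbar" "P (qe P th) = th"
proof -
  have "continuous_on {0..qbar} P"
    using P_cont by (rule continuous_on_subset) auto
  then obtain x where x: "0 \<le> x" "x \<le> qbar" "P x = th"
    using IVT2'[of P qbar th 0] assms by auto
  moreover have "x \<noteq> qbar"
    using x assms by auto
  ultimately show "0 \<le> qe P th" "qe P th < qbar" "P (qe P th) = th"
    using qe_eqI[OF x(1,3)] by auto
qed

lemma net_surplus_less_at_efficient:
  assumes "0 \<le> x" "P x = th" "0 \<le> y" "y \<noteq> x"
  shows "V P y - th * y < V P x - th * x"
proof (cases "y < x")
  case True
  then show ?thesis
    using V_diff_greater[of y x] assms by (simp add: algebra_simps)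
next
  case False
  then show ?thesis
    using V_diff_less[of x y] assms by (simp add: algebra_simps)
qed

lemma V_minus_qP_strict_mono: "strict_mono_on {0..} (\<lambda>q. V P q - q * P q)"
proof (rule strict_mono_onI)
  fix a b :: real assume "a \<in> {0..}" "b \<in> {0..}" "a < b"
  moreover have "a * P b \<le> a * P a"
    using P_decr[of a b] \<open>a \<in> {0..}\<close> \<open>a < b\<close> by (simp add: mult_left_mono)
  ultimately show "V P a - a * P a < V P b - b * P b"
    using V_diff_greater[of a b] by (simp add: algebra_simps)
qed

lemma qhat_correct:
  assumes "0 < c" "0 \<le> x" "c < V P x - x * P x"
  shows "0 < qhat P c" "qhat P c < x" "V P (qhat P c) - qhat P c * P (qhat P c) = c"
proof -
  have V0: "V P 0 = 0"
    by (simp add: V_def)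
  have "continuous_on {0..x} (V P)"
    unfolding V_def[abs_def] using P_integrable by (intro indefinite_integral_continuous_1) simp
  moreover have "continuous_on {0..x} P"
    using P_cont by (rule continuous_on_subset) auto
  ultimately have "continuous_on {0..x} (\<lambda>q. V P q - q * P q)"
    by (intro continuous_intros)
  then obtain y where y: "0 \<le> y" "y \<le> x" "V P y - y * P y = c"
    using IVT'[of "\<lambda>q. V P q - q * P q" 0 c x] assms V0 by auto
  have "y \<noteq> 0" "y \<noteq> x"
    using y assms V0 by auto
  moreover have "qhat P c = y"
    unfolding qhat_def
  proof (rule the_equality)
    fix z assume "0 < z \<and> V P z - z * P z = c"
    then show "z = y"
      using strict_mono_onD[OF V_minus_qP_strict_mono, of z y]
        strict_mono_onD[OF V_minus_qP_strict_mono, of y z] y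
      by (cases z y rule: linorder_cases) auto
  qed (use y \<open>y \<noteq> 0\<close> in auto)
  ultimately show "0 < qhat P c" "qhat P c < x" "V P (qhat P c) - qhat P c * P (qhat P c) = c"
    using y by auto
qed

end

locale regulation = demand +
  fixes c thl thh qbar :: real
  assumes thl_pos: "0 < thl" and thl_less_thh: "thl < thh" and c_pos: "0 < c"
    and qbar_pos: "0 < qbar" and P_qbar: "P qbar = 0" and thh_le_P0: "thh \<le> P 0"
    and TS_efficient_thh_pos: "0 < TS P c thh (qe P thh)"
begin

lemma thh_less_P0: "thh < P 0"
proof (rule ccontr)
  assume "\<not> thh < P 0"
  then have "qe P thh = 0"
    using thh_le_P0 qe_eqI[of 0 thh] by simp
  then show False
    using TS_efficient_thh_pos by (simp add: TS_def)
qed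

lemma qe_bounds:
  assumes "th \<in> {thl..thh}"
  shows "0 < qe P th" "qe P th < qbar" "P (qe P th) = th"
proof -
  have "th \<le> P 0" "0 < th"
    using assms thh_less_P0 thl_pos by auto
  then have "0 \<le> qe P th" "qe P th < qbar" "P (qe P th) = th"
    using qe_correct[of qbar th] qbar_pos P_qbar by auto
  moreover have "qe P th \<noteq> 0"
    using \<open>P (qe P th) = th\<close> assms thh_less_P0 by auto
  ultimately show "0 < qe P th" "qe P th < qbar" "P (qe P th) = th"
    by auto
qed

lemma qe_antimono: "antimono_on {thl..thh} (qe P)"
proof (rule monotone_onI)
  fix a b assume ab: "a \<in> {thl..thh}" "b \<in> {thl..thh}" "a \<le> b"
  show "qe P b \<le> qe P a"
  proof (rule ccontr)
    assume "\<not> qe P b \<le> qe P a"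
    then have "P (qe P b) < P (qe P a)"
      using P_decr qe_bounds(1)[OF ab(1)] by simp
    then show False
      using qe_bounds(3) ab by simp
  qed
qed

lemma TS_le_TS_qe:
  assumes "th \<in> {thl..thh}" "0 < y"
  shows "TS P c th y \<le> TS P c th (qe P th)"
proof (cases "y = qe P th")
  case False
  then have "V P y - th * y < V P (qe P th) - th * qe P th"
    using net_surplus_less_at_efficient qe_bounds[OF assms(1)] assms by simp
  then show ?thesis
    using assms qe_bounds(1)[OF assms(1)] by (simp add: TS_def)
qed simp

lemma TS_qe_pos:
  assumes "th \<in> {thl..thh}"
  shows "0 < TS P c th (qe P th)"
proof -
  have thh: "thh \<in> {thl..thh}"
    using thl_less_thh by simp
  then have "TS P c thh (qe P thh) \<le> TS P c th (qe P thh)"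
    using assms qe_bounds(1)[OF thh] by (simp add: TS_def mult_right_mono)
  also have "\<dots> \<le> TS P c th (qe P th)"
    using TS_le_TS_qe assms qe_bounds(1)[OF thh] by simp
  finally show ?thesis
    using TS_efficient_thh_pos by simp
qed

lemma TS_less_TS_qe:
  assumes "th \<in> {thl..thh}" "0 \<le> y" "y \<noteq> qe P th"
  shows "TS P c th y < TS P c th (qe P th)"
proof (cases "y = 0")
  case True
  then show ?thesis
    using TS_qe_pos[OF assms(1)] by (simp add: TS_def)
next
  case False
  then have "V P y - th * y < V P (qe P th) - th * qe P th"
    using net_surplus_less_at_efficient qe_bounds[OF assms(1)] assms by simp
  then show ?thesis
    using assms False qe_bounds(1)[OF assms(1)] by (simp add: TS_def)
qed

lemma qhat_pos: "0 < qhat P c" and qhat_less_qe_thh: "qhat P c < qe P thh"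
proof -
  have thh: "thh \<in> {thl..thh}"
    using thl_less_thh by simp
  have gap: "c < V P (qe P thh) - qe P thh * P (qe P thh)"
    using TS_efficient_thh_pos qe_bounds[OF thh] by (simp add: TS_def algebra_simps)
  show "0 < qhat P c" "qhat P c < qe P thh"
    using qhat_correct[OF c_pos _ gap] qe_bounds(1)[OF thh] by auto
qed

lemma qhat_less_qe:
  assumes "th \<in> {thl..thh}"
  shows "qhat P c < qe P th"
  using qhat_less_qe_thh monotone_onD[OF qe_antimono assms, of thh] assms thl_less_thh by auto

end

lemma IC_allocation_antimono:
  assumes "IC thl thh r q u"
  shows "antimono_on {thl..thh} (\<lambda>th. q th * r th)"
proof (rule monotone_onI)
  fix a b assume ab: "a \<in> {thl..thh}" "b \<in> {thl..thh}" "a \<le> b"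
  then have "u b + (b - a) * (q b * r b) \<le> u a" "u a + (a - b) * (q a * r a) \<le> u b"
    using assms by (auto simp: IC_def Theta_def mult.assoc)
  then have "(b - a) * (q b * r b - q a * r a) \<le> 0"
    by (simp add: algebra_simps)
  then show "q b * r b \<le> q a * r a"
    using ab by (cases "a = b") (auto simp: mult_le_0_iff)
qed

text \<open>The envelope formula for the utility of an IC mechanism leaving the top type no rent.\<close>
definition rent :: "real \<Rightarrow> (real \<Rightarrow> real) \<Rightarrow> (real \<Rightarrow> real) \<Rightarrow> real \<Rightarrow> real" where
  "rent thh r q th = integral {th..thh} (\<lambda>z. q z * r z)"

lemma IC_rent:
  assumes "antimono_on {thl..thh} (\<lambda>th. q th * r th)"
  shows "IC thl thh r q (rent thh r q)"
  using tail_integral_subgradient[OF assms] by (simp add: IC_def Theta_def rent_def mult.assoc)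

lemma IR_rent:
  assumes anti: "antimono_on {thl..thh} (\<lambda>th. q th * r th)"
    and nonneg: "\<And>th. th \<in> {thl..thh} \<Longrightarrow> 0 \<le> q th * r th"
  shows "IR thl thh (rent thh r q)"
  unfolding IR_def Theta_def rent_def
proof
  fix th assume th: "th \<in> {thl..thh}"
  have "antimono_on {th..thh} (\<lambda>th. q th * r th)"
    using anti by (rule monotone_on_subset) (use th in auto)
  then show "0 \<le> integral {th..thh} (\<lambda>z. q z * r z)"
    using antimono_on_integrable nonneg th by (intro integral_nonneg) auto
qed

lemma rent_le_utility_decrement:
  assumes IC: "IC thl thh r q u"
    and anti: "antimono_on {thl..thh} (\<lambda>th. q' th * r' th)"
    and le: "\<And>th. th \<in> {thl<..thh} \<Longrightarrow> q' th * r' th \<le> q th * r th"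
    and th: "th \<in> {thl..thh}"
  shows "rent thh r' q' th \<le> u th - u thh"
  unfolding rent_def
proof (rule tail_integral_le_decrement[OF anti _ th])
  fix x y assume xy: "thl \<le> x" "x < y" "y \<le> thh"
  then have "u y + (y - x) * (q y * r y) \<le> u x"
    using IC by (auto simp: IC_def Theta_def mult.assoc)
  moreover have "(y - x) * (q' y * r' y) \<le> (y - x) * (q y * r y)"
    using le xy by (intro mult_left_mono) auto
  ultimately show "(y - x) * (q' y * r' y) \<le> u x - u y"
    by simp
qed

definition floor_partition :: "(real \<Rightarrow> real) \<Rightarrow> real \<Rightarrow> real \<Rightarrow> real \<Rightarrow>
    (real \<Rightarrow> real) \<Rightarrow> (real \<Rightarrow> real) \<Rightarrow> real set \<Rightarrow> real set \<Rightarrow> real set \<Rightarrow> bool" where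
  "floor_partition P c thl thh r q T1 T01 T0 \<longleftrightarrow>
     is_interval T1 \<and> is_interval T01 \<and> is_interval T0 \<and>
     T1 \<inter> T01 = {} \<and> T1 \<inter> T0 = {} \<and> T01 \<inter> T0 = {} \<and>
     T1 \<union> T01 \<union> T0 = Theta thl thh \<and>
     (\<forall>x\<in>T0. \<forall>y\<in>T01. x > y) \<and> (\<forall>x\<in>T01. \<forall>y\<in>T1. x > y) \<and>
     (\<forall>th\<in>T1. q th \<ge> qhat P c \<and> r th = 1) \<and>
     (\<forall>th\<in>T01. q th = qhat P c \<and> r th \<in> {0<..<1}) \<and>
     (\<forall>th\<in>T0. q th = 0 \<and> r th = 0)"

lemma floor_randomized_iff:
  "floor_randomized P c thl thh qbar r q u \<longleftrightarrow>
     mechanism thl thh qbar r q u \<and> IC thl thh r q u \<and> IR thl thh u \<and> u thh = 0 \<and>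
     (\<exists>T1 T01 T0. floor_partition P c thl thh r q T1 T01 T0)"
  unfolding floor_randomized_def floor_partition_def by blast

text \<open>The definition orders the excluded types above the rationed ones only; when nobody is
  rationed, incentive compatibility still puts them above the served ones.\<close>
lemma floor_partition_excluded_above_served:
  assumes part: "floor_partition P c thl thh r q T1 T01 T0" and IC: "IC thl thh r q u"
    and qhat: "0 < qhat P c" and x: "x \<in> T0" and y: "y \<in> T1"
  shows "y < x"
proof (rule ccontr)
  assume "\<not> y < x"
  moreover have "x \<in> {thl..thh}" "y \<in> {thl..thh}"
    using part x y by (auto simp: floor_partition_def Theta_def)
  ultimately have "q y * r y \<le> q x * r x"
    using monotone_onD[OF IC_allocation_antimono[OF IC], of x y] by simp
  moreover have "q x = 0" "qhat P c \<le> q y" "r y = 1"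
    using part x y by (auto simp: floor_partition_def)
  ultimately show False
    using qhat by simp
qed

lemma floor_partition_rate_antimono:
  assumes part: "floor_partition P c thl thh r q T1 T01 T0"
    and mech: "mechanism thl thh qbar r q u" and IC: "IC thl thh r q u" and qhat: "0 < qhat P c"
  shows "antimono_on {thl..thh} r"
proof (rule monotone_onI)
  fix a b assume a: "a \<in> {thl..thh}" and b: "b \<in> {thl..thh}" and ab: "a \<le> b"
  have cover: "T1 \<union> T01 \<union> T0 = {thl..thh}"
    and o1: "\<forall>x\<in>T0. \<forall>y\<in>T01. y < x" and o2: "\<forall>x\<in>T01. \<forall>y\<in>T1. y < x"
    and s1: "\<forall>th\<in>T1. r th = 1" and s01: "\<forall>th\<in>T01. q th = qhat P c" and s0: "\<forall>th\<in>T0. r th = 0"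
    using part by (auto simp: floor_partition_def Theta_def)
  have r: "0 \<le> r a" "r b \<le> 1"
    using mech a b by (auto simp: mechanism_def Theta_def)
  show "r b \<le> r a"
  proof (cases "b \<in> T0")
    case True
    then show ?thesis using s0 r by simp
  next
    case b_served: False
    consider "a \<in> T1" | "a \<in> T01" | "a \<in> T0"
      using cover a by blast
    then show ?thesis
    proof cases
      case 1
      then show ?thesis using s1 r by simp
    next
      case 2
      have "b \<notin> T1"
      proof
        assume "b \<in> T1"
        then have "b < a" using o2 2 by blast
        then show False using ab by simp
      qed
      then have "b \<in> T01"
        using b_served cover b by blast
      then have "qhat P c * r b \<le> qhat P c * r a"
        using monotone_onD[OF IC_allocation_antimono[OF IC] a b ab] s01 2 by simp
      then show ?thesis using qhat by simp
    next
      case 3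
      have "b \<in> T1 \<or> b \<in> T01"
        using b_served cover b by blast
      then have "b < a"
        using o1 3 floor_partition_excluded_above_served[OF part IC qhat 3] by blast
      then show ?thesis using ab by simp
    qed
  qed
qed

lemma is_interval_remove_lower_end:
  fixes S :: "real set"
  assumes "is_interval S" "S \<subseteq> {a..b}"
  shows "is_interval (S - {a})"
  unfolding is_interval_1
proof (intro ballI allI impI)
  fix x y z assume x: "x \<in> S - {a}" and y: "y \<in> S - {a}" and z: "x \<le> z \<and> z \<le> y"
  have "z \<in> S"
    using assms(1) x y z unfolding is_interval_1 by blast
  moreover have "a < x"
    using x assms(2) by force
  ultimately show "z \<in> S - {a}"
    using z by auto
qed

lemma floor_partition_lower_end:
  assumes part: "floor_partition P c thl thh r q T1 T01 T0"
    and sep: "\<And>x y. x \<in> T0 \<Longrightarrow> y \<in> T1 \<Longrightarrow> y < x" and "thl \<le> thh"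
    and served: "\<forall>th\<in>insert thl T1. qhat P c \<le> q' th \<and> r' th = 1"
    and rationed: "\<forall>th\<in>T01 - {thl}. q' th = qhat P c \<and> r' th \<in> {0<..<1}"
    and excluded: "\<forall>th\<in>T0 - {thl}. q' th = 0 \<and> r' th = 0"
  shows "floor_partition P c thl thh r' q' (insert thl T1) (T01 - {thl}) (T0 - {thl})"
proof -
  have cover: "T1 \<union> T01 \<union> T0 = {thl..thh}"
    and iv: "is_interval T1" "is_interval T01" "is_interval T0"
    and dj: "T1 \<inter> T01 = {}" "T1 \<inter> T0 = {}" "T01 \<inter> T0 = {}"
    and o1: "\<forall>x\<in>T0. \<forall>y\<in>T01. y < x" and o2: "\<forall>x\<in>T01. \<forall>y\<in>T1. y < x"
    using part by (auto simp: floor_partition_def Theta_def)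
  have "is_interval (insert thl T1)"
    unfolding is_interval_1
  proof (intro ballI allI impI)
    fix a b x assume a: "a \<in> insert thl T1" and b: "b \<in> insert thl T1" and x: "a \<le> x \<and> x \<le> b"
    show "x \<in> insert thl T1"
    proof (cases "x = thl")
      case False
      have ab: "a \<in> {thl..thh}" "b \<in> {thl..thh}"
        using a b cover \<open>thl \<le> thh\<close> by auto
      then have "b \<in> T1" "x \<in> {thl..thh}"
        using b x False by auto
      then show ?thesis
        using cover o2 sep[of x b] x by fastforce
    qed simp
  qed
  moreover have "is_interval (T01 - {thl})" "is_interval (T0 - {thl})"
    using iv cover by (auto intro: is_interval_remove_lower_end)
  moreover have "insert thl T1 \<union> (T01 - {thl}) \<union> (T0 - {thl}) = {thl..thh}"
    using cover \<open>thl \<le> thh\<close> by auto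
  moreover have "\<forall>x\<in>T01 - {thl}. \<forall>y\<in>insert thl T1. y < x"
    using o2 cover by fastforce
  ultimately show ?thesis
    using dj o1 served rationed excluded unfolding floor_partition_def Theta_def by blast
qed

lemma mult_left_le_one_less:
  fixes r t s :: "'a::linordered_idom"
  assumes "0 \<le> r" "r \<le> 1" "t < s" "0 < s"
  shows "r * t < s"
proof (cases "0 \<le> t")
  case True
  then have "r * t \<le> t"
    using assms by (simp add: mult_left_le_one_le)
  then show ?thesis
    using assms by simp
next
  case False
  then have "r * t \<le> 0"
    using assms by (simp add: mult_nonneg_nonpos)
  then show ?thesis
    using assms by simp
qed

definition dd_quantity :: "(real \<Rightarrow> real) \<Rightarrow> real \<Rightarrow> (real \<Rightarrow> real) \<Rightarrow> real \<Rightarrow> real" where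
  "dd_quantity P thl q th = (if th = thl then qe P th else min (q th) (qe P th))"

definition dd_rate :: "real \<Rightarrow> (real \<Rightarrow> real) \<Rightarrow> real \<Rightarrow> real" where
  "dd_rate thl r th = (if th = thl then 1 else r th)"

context regulation
begin

lemma dd_allocation_antimono:
  assumes M: "floor_randomized P c thl thh qbar r q u"
  shows "antimono_on {thl..thh} (\<lambda>th. dd_quantity P thl q th * dd_rate thl r th)"
proof (rule monotone_onI)
  fix a b assume a: "a \<in> {thl..thh}" and b: "b \<in> {thl..thh}" and ab: "a \<le> b"
  obtain T1 T01 T0 where mech: "mechanism thl thh qbar r q u" and IC: "IC thl thh r q u"
    and part: "floor_partition P c thl thh r q T1 T01 T0"
    using M by (auto simp: floor_randomized_iff)
  have r: "0 \<le> r b" "r b \<le> 1" "r b \<le> r a"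
    using mech b monotone_onD[OF floor_partition_rate_antimono[OF part mech IC qhat_pos] a b ab]
    by (auto simp: mechanism_def Theta_def)
  have qr: "q b * r b \<le> q a * r a"
    using monotone_onD[OF IC_allocation_antimono[OF IC] a b ab] .
  have qe: "0 < qe P b" "qe P b \<le> qe P a"
    using qe_bounds(1)[OF b] monotone_onD[OF qe_antimono a b ab] by auto
  have "min (q b) (qe P b) * r b \<le> q b * r b" "min (q b) (qe P b) * r b \<le> qe P b * r b"
    using r by (auto intro: mult_right_mono)
  moreover have "qe P b * r b \<le> qe P a * r a"
    using qe r by (intro mult_mono) auto
  moreover have "qe P b * r b \<le> qe P a"
    using qe r mult_left_le[of "r b" "qe P b"] by linarith
  ultimately show "dd_quantity P thl q b * dd_rate thl r b \<le> dd_quantity P thl q a * dd_rate thl r a"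
    using qr ab a by (auto simp: dd_quantity_def dd_rate_def min_def)
qed

lemma dd_rent_le_utility:
  assumes M: "floor_randomized P c thl thh qbar r q u" and th: "th \<in> {thl..thh}"
  shows "rent thh (dd_rate thl r) (dd_quantity P thl q) th \<le> u th"
proof -
  have mech: "mechanism thl thh qbar r q u" and IC: "IC thl thh r q u" and "u thh = 0"
    using M by (auto simp: floor_randomized_def)
  have "dd_quantity P thl q y * dd_rate thl r y \<le> q y * r y" if "y \<in> {thl<..thh}" for y
    using mech that by (auto simp: dd_quantity_def dd_rate_def mechanism_def Theta_def
        intro: mult_right_mono)
  then show ?thesis
    using rent_le_utility_decrement[OF IC dd_allocation_antimono[OF M] _ th] \<open>u thh = 0\<close>
    by simp
qed

lemma floor_randomized_dd:
  assumes M: "floor_randomized P c thl thh qbar r q u"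
  shows "floor_randomized P c thl thh qbar (dd_rate thl r) (dd_quantity P thl q)
           (rent thh (dd_rate thl r) (dd_quantity P thl q))"
proof -
  obtain T1 T01 T0 where mech: "mechanism thl thh qbar r q u" and IC: "IC thl thh r q u"
    and part: "floor_partition P c thl thh r q T1 T01 T0"
    using M by (auto simp: floor_randomized_iff)
  define r' where "r' = dd_rate thl r"
  define q' where "q' = dd_quantity P thl q"
  have r': "r' th = (if th = thl then 1 else r th)"
    and q': "q' th = (if th = thl then qe P th else min (q th) (qe P th))" for th
    by (simp_all add: r'_def q'_def dd_rate_def dd_quantity_def)
  have bounds: "0 \<le> r th" "r th \<le> 1" "0 \<le> q th" "q th = 0 \<longleftrightarrow> r th = 0"
    "0 < qe P th" "qe P th < qbar" "qhat P c < qe P th" if "th \<in> {thl..thh}" for th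
  proof -
    show "0 \<le> r th" "r th \<le> 1" "0 \<le> q th" "q th = 0 \<longleftrightarrow> r th = 0"
      using mech that unfolding mechanism_def Theta_def by auto
    show "0 < qe P th" "qe P th < qbar" "qhat P c < qe P th"
      using qe_bounds[OF that] qhat_less_qe[OF that] by auto
  qed
  have sub: "T1 \<subseteq> {thl..thh}" "T01 \<subseteq> {thl..thh}" "T0 \<subseteq> {thl..thh}"
    and s1: "\<forall>th\<in>T1. qhat P c \<le> q th \<and> r th = 1"
    and s01: "\<forall>th\<in>T01. q th = qhat P c \<and> r th \<in> {0<..<1}"
    and s0: "\<forall>th\<in>T0. q th = 0 \<and> r th = 0"
    using part unfolding floor_partition_def Theta_def by auto
  have "\<forall>th\<in>insert thl T1. qhat P c \<le> q' th \<and> r' th = 1"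
  proof
    fix th assume th: "th \<in> insert thl T1"
    then have "qhat P c < qe P th"
      using sub thl_less_thh bounds(7) by auto
    then show "qhat P c \<le> q' th \<and> r' th = 1"
      using th s1 by (auto simp: q' r')
  qed
  moreover have "\<forall>th\<in>T01 - {thl}. q' th = qhat P c \<and> r' th \<in> {0<..<1}"
  proof
    fix th assume th: "th \<in> T01 - {thl}"
    then have "qhat P c < qe P th"
      using sub bounds(7) by auto
    then show "q' th = qhat P c \<and> r' th \<in> {0<..<1}"
      using th s01 by (simp add: q' r')
  qed
  moreover have "\<forall>th\<in>T0 - {thl}. q' th = 0 \<and> r' th = 0"
  proof
    fix th assume th: "th \<in> T0 - {thl}"
    then have "0 < qe P th"
      using sub bounds(5) by auto
    then show "q' th = 0 \<and> r' th = 0"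
      using th s0 by (simp add: q' r')
  qed
  ultimately have "floor_partition P c thl thh r' q' (insert thl T1) (T01 - {thl}) (T0 - {thl})"
    using thl_less_thh
    by (intro floor_partition_lower_end[OF part floor_partition_excluded_above_served[OF part IC qhat_pos]])
      simp_all
  moreover have "mechanism thl thh qbar r' q' (rent thh r' q')"
    unfolding mechanism_def Theta_def
  proof
    fix th assume th: "th \<in> {thl..thh}"
    show "r' th \<in> {0..1} \<and> q' th \<in> {0..qbar} \<and> (q' th = 0 \<longleftrightarrow> r' th = 0)"
      using bounds[OF th] by (auto simp: q' r' min_def)
  qed
  moreover have anti: "antimono_on {thl..thh} (\<lambda>th. q' th * r' th)"
    unfolding q'_def r'_def by (rule dd_allocation_antimono[OF M])
  moreover have "IR thl thh (rent thh r' q')"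
  proof (rule IR_rent[OF anti])
    fix th assume th: "th \<in> {thl..thh}"
    show "0 \<le> q' th * r' th"
      using bounds[OF th] by (auto simp: q' r')
  qed
  moreover have "rent thh r' q' thh = 0"
    by (simp add: rent_def)
  ultimately show ?thesis
    unfolding floor_randomized_iff q'_def[symmetric] r'_def[symmetric] using IC_rent[OF anti] by blast
qed

lemma DD_dd_quantity: "DD P thl thh (dd_quantity P thl q)"
  by (auto simp: DD_def dd_quantity_def)

lemma dd_surplus_gt:
  assumes mech: "mechanism thl thh qbar r q u" and th: "th \<in> {thl..thh}"
    and distorted: "qe P th < q th \<or> (th = thl \<and> q th \<noteq> qe P th)"
  shows "r th * TS P c th (q th) < dd_rate thl r th * TS P c th (dd_quantity P thl q th)"
proof -
  have r: "0 \<le> r th" "r th \<le> 1" and q: "0 \<le> q th" "q th = 0 \<longleftrightarrow> r th = 0"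
    using mech th by (auto simp: mechanism_def Theta_def)
  have TS: "TS P c th (q th) < TS P c th (qe P th)"
    using TS_less_TS_qe th q distorted by auto
  show ?thesis
  proof (cases "th = thl")
    case True
    then show ?thesis
      using mult_left_le_one_less[OF r TS TS_qe_pos[OF th]] by (simp add: dd_quantity_def dd_rate_def)
  next
    case False
    then have "0 < r th" "qe P th < q th"
      using distorted qe_bounds(1)[OF th] q r by auto
    then show ?thesis
      using False TS by (simp add: dd_quantity_def dd_rate_def)
  qed
qed

lemma dd_surplus_ge:
  assumes mech: "mechanism thl thh qbar r q u" and th: "th \<in> {thl..thh}"
  shows "r th * TS P c th (q th) \<le> dd_rate thl r th * TS P c th (dd_quantity P thl q th)"
proof (cases "qe P th < q th \<or> (th = thl \<and> q th \<noteq> qe P th)")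
  case True
  then show ?thesis
    using dd_surplus_gt[OF mech th] by fastforce
next
  case False
  have "r th \<le> 1"
    using mech th by (auto simp: mechanism_def Theta_def)
  then show ?thesis
    using False TS_qe_pos[OF th]
    by (auto simp: dd_quantity_def dd_rate_def mult_left_le_one_le)
qed

end

theorem lemma4:
  fixes P :: "real \<Rightarrow> real" and c thl thh qbar \<alpha> :: real
    and r q u :: "real \<Rightarrow> real"
  assumes thl_pos: "0 < thl" and thl_thh: "thl < thh"
    and c_pos: "c > 0"
    and P_cont: "continuous_on {0..} P"
    and P_decr: "\<And>x y. 0 \<le> x \<Longrightarrow> x < y \<Longrightarrow> P y < P x"
    and qbar_pos: "qbar > 0" and P_qbar: "P qbar = 0"
    and thh_range: "thh \<le> P 0"
    and A2: "TS P c thh (qe P thh) > 0"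
    and alpha: "0 \<le> \<alpha>" "\<alpha> < 1"
    and M: "floor_randomized P c thl thh qbar r q u"
  shows "\<exists>r' q' u' :: real \<Rightarrow> real.
           floor_randomized P c thl thh qbar r' q' u' \<and> DD P thl thh q' \<and>
           (\<forall>th\<in>Theta thl thh. th > thl \<longrightarrow> q' th \<le> q th) \<and>
           (\<forall>th\<in>Theta thl thh. u' th \<le> u th) \<and>
           (\<forall>th\<in>Theta thl thh. RS P c \<alpha> th r' q' u' \<ge> RS P c \<alpha> th r q u) \<and>
           (\<forall>th\<in>Theta thl thh. q th > qe P th \<longrightarrow>
              (th > thl \<longrightarrow> q' th < q th) \<and> RS P c \<alpha> th r' q' u' > RS P c \<alpha> th r q u) \<and>
           (q thl \<noteq> qe P thl \<longrightarrow> RS P c \<alpha> thl r' q' u' > RS P c \<alpha> thl r q u)"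
proof -
  interpret regulation P c thl thh qbar
    using thl_pos thl_thh c_pos P_cont P_decr qbar_pos P_qbar thh_range A2 by unfold_locales
  define r' where "r' = dd_rate thl r"
  define q' where "q' = dd_quantity P thl q"
  define u' where "u' = rent thh r' q'"
  have mech: "mechanism thl thh qbar r q u"
    using M by (simp add: floor_randomized_def)
  have u'_le: "u' th \<le> u th" if "th \<in> Theta thl thh" for th
    using dd_rent_le_utility[OF M] that by (simp add: u'_def r'_def q'_def Theta_def)
  have RS_gain: "RS P c \<alpha> th r q u + (r' th * TS P c th (q' th) - r th * TS P c th (q th))
      + (1 - \<alpha>) * (u th - u' th) = RS P c \<alpha> th r' q' u'" for th
    by (simp add: RS_def algebra_simps)
  have rent_gain: "0 \<le> (1 - \<alpha>) * (u th - u' th)" if "th \<in> Theta thl thh" for th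
    using u'_le[OF that] alpha by simp
  have RS_ge: "RS P c \<alpha> th r q u \<le> RS P c \<alpha> th r' q' u'" if "th \<in> Theta thl thh" for th
    using dd_surplus_ge[OF mech] RS_gain[of th] rent_gain[OF that] that
    by (fastforce simp: r'_def q'_def Theta_def)
  have RS_gt: "RS P c \<alpha> th r q u < RS P c \<alpha> th r' q' u'"
    if "th \<in> Theta thl thh" "qe P th < q th \<or> (th = thl \<and> q th \<noteq> qe P th)" for th
    using dd_surplus_gt[OF mech] RS_gain[of th] rent_gain[OF that(1)] that
    by (fastforce simp: r'_def q'_def Theta_def)
  have "thl \<in> Theta thl thh"
    using thl_thh by (simp add: Theta_def)
  moreover have "floor_randomized P c thl thh qbar r' q' u'"
    using floor_randomized_dd[OF M] by (simp add: u'_def r'_def q'_def)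
  moreover have "DD P thl thh q'"
    unfolding q'_def by (rule DD_dd_quantity)
  ultimately show ?thesis
    using u'_le RS_ge RS_gt by (intro exI[of _ r'] exI[of _ q'] exI[of _ u'])
      (auto simp: q'_def dd_quantity_def)
qed

end
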